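(* Let $G$ be a connected edge-stable equimatchable graph with a cut vertex $v$. Then each connected component of $G-v$ is an edge-stable equimatchable graph.
   Context: All graphs are finite and simple. A graph is equimatchable if all its maximal matchings have the same cardinality; an equimatchable graph $G$ is edge-stable if $G\setminus e$ (delete edge $e$, keep vertices) is equimatchable for every $e\in E(G)$. A cut vertex of a connected graph is a vertex whose removal disconnects it. *)

theory Defs
  imports Main
begin

definition graph :: "'a set \<Rightarrow> 'a set set \<Rightarrow> bool" where
  "graph V E \<longleftrightarrow> finite V \<and> (\<forall>e\<in>E. \<exists>u v. e = {u, v} \<and> u \<noteq> v \<and> u \<in> V \<and> v \<in> V)"

definition matching :: "'a set set \<Rightarrow> 'a set set \<Rightarrow> bool" where
  "matching E M \<longleftrightarrow> M \<subseteq> E \<and> (\<forall>e1\<in>M. \<forall>e2\<in>M. e1 \<noteq> e2 \<longrightarrow> e1 \<inter> e2 = {})"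

definition maximal_matching :: "'a set set \<Rightarrow> 'a set set \<Rightarrow> bool" where
  "maximal_matching E M \<longleftrightarrow> matching E M \<and> (\<forall>M'. matching E M' \<longrightarrow> M \<subseteq> M' \<longrightarrow> M' = M)"

definition equimatchable :: "'a set \<Rightarrow> 'a set set \<Rightarrow> bool" where
  "equimatchable V E \<longleftrightarrow>
     (\<forall>M1 M2. maximal_matching E M1 \<longrightarrow> maximal_matching E M2 \<longrightarrow> card M1 = card M2)"

definition edge_stable :: "'a set \<Rightarrow> 'a set set \<Rightarrow> bool" where
  "edge_stable V E \<longleftrightarrow> equimatchable V E \<and> (\<forall>e\<in>E. equimatchable V (E - {e}))"

inductive reachable :: "'a set \<Rightarrow> 'a set set \<Rightarrow> 'a \<Rightarrow> 'a \<Rightarrow> bool" for V E where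
  refl: "u \<in> V \<Longrightarrow> reachable V E u u"
| step: "reachable V E u w \<Longrightarrow> {w, x} \<in> E \<Longrightarrow> x \<in> V \<Longrightarrow> reachable V E u x"

definition connected :: "'a set \<Rightarrow> 'a set set \<Rightarrow> bool" where
  "connected V E \<longleftrightarrow> V \<noteq> {} \<and> (\<forall>u\<in>V. \<forall>w\<in>V. reachable V E u w)"

definition induced_edges :: "'a set set \<Rightarrow> 'a set \<Rightarrow> 'a set set" where
  "induced_edges E S = {e \<in> E. e \<subseteq> S}"

definition component :: "'a set \<Rightarrow> 'a set set \<Rightarrow> 'a set \<Rightarrow> bool" where
  "component V E C \<longleftrightarrow> C \<subseteq> V \<and> connected C (induced_edges E C) \<and>
     (\<forall>D. C \<subseteq> D \<longrightarrow> D \<subseteq> V \<longrightarrow> connected D (induced_edges E D) \<longrightarrow> D = C)"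

definition cut_vertex :: "'a set \<Rightarrow> 'a set set \<Rightarrow> 'a \<Rightarrow> bool" where
  "cut_vertex V E v \<longleftrightarrow> v \<in> V \<and> \<not> connected (V - {v}) (induced_edges E (V - {v}))"

end

theory Submission
  imports Defs
begin

text \<open>Let C be a component of G - v. Since G is connected and v is a cut vertex, v has a
  neighbour u outside C, and every edge leaving C passes through v. Extend the edge vu to a
  maximal matching N of the edges avoiding C. Then N meets every edge not inside C, so for each
  maximal matching M of G[C] the union M \<union> N is a maximal matching of G, of size |M| + |N|.
  Equimatchability of G therefore passes to G[C]. Deleting an edge e of G[C] keeps vu and the
  boundary condition, so the same argument applied to G - e gives edge-stability.\<close>

lemma matching_insert:
  assumes "matching E M" "f \<in> E" "\<forall>g\<in>M. f \<inter> g = {}"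
  shows "matching E (insert f M)"
  using assms unfolding matching_def by blast

lemma matching_Un:
  assumes "matching E M" "matching E N" "\<forall>g\<in>M. \<forall>h\<in>N. g \<inter> h = {}"
  shows "matching E (M \<union> N)"
  unfolding matching_def
proof (intro conjI ballI impI)
  show "M \<union> N \<subseteq> E" using assms(1,2) by (simp add: matching_def)
next
  have M: "\<forall>g\<in>M. \<forall>h\<in>M. g \<noteq> h \<longrightarrow> g \<inter> h = {}"
    and N: "\<forall>g\<in>N. \<forall>h\<in>N. g \<noteq> h \<longrightarrow> g \<inter> h = {}"
    using assms(1,2) by (simp_all add: matching_def)
  fix g h assume "g \<in> M \<union> N" "h \<in> M \<union> N" "g \<noteq> h"
  then show "g \<inter> h = {}"
    using M N assms(3) by (metis Int_commute UnE)
qed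

lemma maximal_matching_iff:
  "maximal_matching E M \<longleftrightarrow> matching E M \<and> (\<forall>f\<in>E. f \<notin> M \<longrightarrow> (\<exists>g\<in>M. f \<inter> g \<noteq> {}))"
proof
  assume max: "maximal_matching E M"
  have "\<exists>g\<in>M. f \<inter> g \<noteq> {}" if "f \<in> E" "f \<notin> M" for f
  proof (rule ccontr)
    assume "\<not> (\<exists>g\<in>M. f \<inter> g \<noteq> {})"
    then have "matching E (insert f M)"
      using max that(1) by (intro matching_insert) (auto simp: maximal_matching_def)
    then have "insert f M = M"
      using max unfolding maximal_matching_def by (meson subset_insertI)
    with \<open>f \<notin> M\<close> show False by blast
  qed
  moreover have "matching E M" using max by (simp add: maximal_matching_def)
  ultimately show "matching E M \<and> (\<forall>f\<in>E. f \<notin> M \<longrightarrow> (\<exists>g\<in>M. f \<inter> g \<noteq> {}))"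
    by blast
next
  assume M: "matching E M \<and> (\<forall>f\<in>E. f \<notin> M \<longrightarrow> (\<exists>g\<in>M. f \<inter> g \<noteq> {}))"
  have "M' \<subseteq> M" if M': "matching E M'" "M \<subseteq> M'" for M'
  proof
    fix f assume "f \<in> M'"
    show "f \<in> M"
    proof (rule ccontr)
      assume "f \<notin> M"
      moreover have "f \<in> E" using M' \<open>f \<in> M'\<close> by (auto simp: matching_def)
      ultimately obtain g where "g \<in> M" "f \<inter> g \<noteq> {}" using M by blast
      moreover have "g \<in> M'" "f \<noteq> g" using \<open>g \<in> M\<close> M'(2) \<open>f \<notin> M\<close> by auto
      ultimately show False using M'(1) \<open>f \<in> M'\<close> unfolding matching_def by blast
    qed
  qed
  with M show "maximal_matching E M"
    unfolding maximal_matching_def by blast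
qed

lemma ex_maximal_matching_superset:
  assumes "finite E" "matching E M"
  shows "\<exists>M'. M \<subseteq> M' \<and> maximal_matching E M'"
proof -
  let ?A = "{M'. matching E M'}"
  have "?A \<subseteq> Pow E" by (auto simp: matching_def)
  then have "finite ?A" using assms(1) by (simp add: finite_subset)
  then obtain M' where "M' \<in> ?A" "M \<subseteq> M'" "\<forall>M''\<in>?A. M' \<subseteq> M'' \<longrightarrow> M' = M''"
    using finite_has_maximal2[of ?A M] assms(2) by blast
  then have "M \<subseteq> M' \<and> maximal_matching E M'"
    unfolding maximal_matching_def by (metis mem_Collect_eq)
  then show ?thesis ..
qed

lemma maximal_matching_Un_outside:
  assumes M: "maximal_matching (induced_edges E S) M"
    and N: "matching E N" "\<forall>g\<in>N. g \<inter> S = {}"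
    and covers: "\<forall>f\<in>E. \<not> f \<subseteq> S \<longrightarrow> (\<exists>g\<in>N. f \<inter> g \<noteq> {})"
  shows "maximal_matching E (M \<union> N)"
proof -
  have M_inside: "matching E M" "\<forall>g\<in>M. g \<subseteq> S"
    using M by (auto simp: maximal_matching_def matching_def induced_edges_def)
  have "matching E (M \<union> N)"
    using M_inside N by (intro matching_Un) blast+
  moreover have "\<exists>g\<in>M \<union> N. f \<inter> g \<noteq> {}" if f: "f \<in> E" "f \<notin> M \<union> N" for f
  proof (cases "f \<subseteq> S")
    case True
    then have "f \<in> induced_edges E S" using f(1) by (simp add: induced_edges_def)
    then obtain g where "g \<in> M" "f \<inter> g \<noteq> {}"
      using M f(2) unfolding maximal_matching_iff by blast
    then show ?thesis by blast
  next
    case False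
    then show ?thesis using covers f(1) by blast
  qed
  ultimately show ?thesis by (simp add: maximal_matching_iff)
qed

lemma equimatchable_induced_edges:
  assumes "finite E" "equimatchable V E"
    and N: "matching E N" "\<forall>g\<in>N. g \<noteq> {} \<and> g \<inter> S = {}"
    and covers: "\<forall>f\<in>E. \<not> f \<subseteq> S \<longrightarrow> (\<exists>g\<in>N. f \<inter> g \<noteq> {})"
  shows "equimatchable S (induced_edges E S)"
  \<comment> \<open>Nonemptiness keeps M and N disjoint: an empty edge would lie inside S and outside S.\<close>
  unfolding equimatchable_def
proof (intro allI impI)
  fix M1 M2
  assume M1: "maximal_matching (induced_edges E S) M1"
    and M2: "maximal_matching (induced_edges E S) M2"
  have card_Un: "card (M \<union> N) = card M + card N"
    if "maximal_matching (induced_edges E S) M" for M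
  proof (rule card_Un_disjoint)
    have "M \<subseteq> E" "N \<subseteq> E" "\<forall>g\<in>M. g \<subseteq> S"
      using that N(1) by (auto simp: maximal_matching_def matching_def induced_edges_def)
    then show "finite M" "finite N"
      using assms(1) by (auto intro: finite_subset)
    show "M \<inter> N = {}"
    proof (intro equals0I)
      fix g assume "g \<in> M \<inter> N"
      then have "g \<subseteq> S" "g \<inter> S = {}" "g \<noteq> {}"
        using \<open>\<forall>g\<in>M. g \<subseteq> S\<close> N(2) by auto
      then show False by (simp add: Int_absorb2)
    qed
  qed
  have N_outside: "\<forall>g\<in>N. g \<inter> S = {}" using N(2) by blast
  have "card (M1 \<union> N) = card (M2 \<union> N)"
    using assms(2) maximal_matching_Un_outside[OF M1 N(1) N_outside covers]
      maximal_matching_Un_outside[OF M2 N(1) N_outside covers]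
    unfolding equimatchable_def by (elim allE impE)
  then show "card M1 = card M2"
    using card_Un[OF M1] card_Un[OF M2] by simp
qed

lemma graph_finite_edges:
  assumes "graph V E"
  shows "finite E"
proof -
  have "E \<subseteq> Pow V"
    using assms unfolding graph_def by auto
  moreover have "finite V" using assms unfolding graph_def by simp
  ultimately show ?thesis by (meson finite_Pow_iff finite_subset)
qed

lemma graph_edge_nonempty: "graph V E \<Longrightarrow> e \<in> E \<Longrightarrow> e \<noteq> {}"
  unfolding graph_def by auto

lemma graph_subset: "graph V E \<Longrightarrow> F \<subseteq> E \<Longrightarrow> graph V F"
  unfolding graph_def by (meson subsetD)

lemma equimatchable_induced_edges_if_boundary_through:
  assumes G: "graph V E" "equimatchable V E"
    and vu: "{v, u} \<in> E" "v \<notin> C" "u \<notin> C"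
    and boundary: "\<forall>f\<in>E. f \<inter> C \<noteq> {} \<longrightarrow> f \<subseteq> C \<or> v \<in> f"
  shows "equimatchable C (induced_edges E C)"
proof -
  define E' where "E' = {f \<in> E. f \<inter> C = {}}"
  have "finite E'" using graph_finite_edges[OF G(1)] by (simp add: E'_def)
  moreover have "matching E' {{v, u}}" using vu by (simp add: E'_def matching_def)
  ultimately obtain N where N: "{v, u} \<in> N" "maximal_matching E' N"
    using ex_maximal_matching_superset by blast
  have "matching E N" using N(2) by (auto simp: maximal_matching_def matching_def E'_def)
  moreover have "\<forall>g\<in>N. g \<noteq> {} \<and> g \<inter> C = {}"
    using N(2) graph_edge_nonempty[OF G(1)] by (auto simp: maximal_matching_def matching_def E'_def)
  moreover have "\<exists>g\<in>N. f \<inter> g \<noteq> {}" if f: "f \<in> E" "\<not> f \<subseteq> C" for f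
  proof (cases "f \<inter> C = {}")
    case True
    then have "f \<in> E'" using f(1) by (simp add: E'_def)
    show ?thesis
    proof (cases "f \<in> N")
      case True
      then show ?thesis using graph_edge_nonempty[OF G(1) f(1)] by auto
    next
      case False
      then show ?thesis using N(2) \<open>f \<in> E'\<close> unfolding maximal_matching_iff by blast
    qed
  next
    case False
    then have "v \<in> f" using boundary f by blast
    then have "f \<inter> {v, u} \<noteq> {}" by blast
    then show ?thesis using N(1) by (rule bexI)
  qed
  ultimately show ?thesis
    by (intro equimatchable_induced_edges[OF graph_finite_edges[OF G(1)] G(2)]) auto
qed

lemma edge_stable_induced_edges_if_boundary_through:
  assumes G: "graph V E" "edge_stable V E"
    and vu: "{v, u} \<in> E" "v \<notin> C" "u \<notin> C"
    and boundary: "\<forall>f\<in>E. f \<inter> C \<noteq> {} \<longrightarrow> f \<subseteq> C \<or> v \<in> f"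
  shows "edge_stable C (induced_edges E C)"
  unfolding edge_stable_def
proof (intro conjI ballI)
  show "equimatchable C (induced_edges E C)"
    using equimatchable_induced_edges_if_boundary_through[OF G(1) _ vu boundary] G(2)
    by (simp add: edge_stable_def)
next
  fix e assume e: "e \<in> induced_edges E C"
  then have "e \<in> E" and vu': "{v, u} \<in> E - {e}" using vu by (auto simp: induced_edges_def)
  then have "equimatchable V (E - {e})" using G(2) by (simp add: edge_stable_def)
  moreover have "graph V (E - {e})" using graph_subset[OF G(1)] by blast
  moreover have "\<forall>f\<in>E - {e}. f \<inter> C \<noteq> {} \<longrightarrow> f \<subseteq> C \<or> v \<in> f" using boundary by blast
  ultimately have "equimatchable C (induced_edges (E - {e}) C)"
    using equimatchable_induced_edges_if_boundary_through[OF _ _ vu' vu(2,3)] by blast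
  moreover have "induced_edges (E - {e}) C = induced_edges E C - {e}"
    by (auto simp: induced_edges_def)
  ultimately show "equimatchable C (induced_edges E C - {e})" by simp
qed

lemma reachable_mono:
  assumes "reachable C F a b" "C \<subseteq> D" "F \<subseteq> F'"
  shows "reachable D F' a b"
  using assms by (induction rule: reachable.induct) (auto intro: reachable.intros)

lemma reachable_trans:
  assumes "reachable V E a b" "reachable V E b c"
  shows "reachable V E a c"
  using assms(2,1) by (induction rule: reachable.induct) (auto intro: reachable.intros)

lemma reachable_crossing_edge:
  assumes "reachable V E y x" "y \<notin> S" "x \<in> S"
  shows "\<exists>a b. {a, b} \<in> E \<and> a \<notin> S \<and> b \<in> S"
  using assms by (induction rule: reachable.induct) blast+

lemma induced_edges_induced_edges:
  "S \<subseteq> T \<Longrightarrow> induced_edges (induced_edges E T) S = induced_edges E S"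
  unfolding induced_edges_def by blast

lemma component_induced_edges_iff:
  "component S (induced_edges E S) C \<longleftrightarrow> C \<subseteq> S \<and> connected C (induced_edges E C) \<and>
     (\<forall>D. C \<subseteq> D \<longrightarrow> D \<subseteq> S \<longrightarrow> connected D (induced_edges E D) \<longrightarrow> D = C)"
  unfolding component_def by (metis induced_edges_induced_edges)

lemma connected_insert_neighbour:
  assumes C: "connected C (induced_edges E C)" and xy: "x \<in> C" "{x, y} \<in> E"
  shows "connected (insert y C) (induced_edges E (insert y C))"
proof -
  let ?D = "insert y C" and ?F = "induced_edges E (insert y C)"
  have xy_D: "{x, y} \<in> ?F" "{y, x} \<in> ?F"
    using xy by (simp_all add: induced_edges_def insert_commute)
  have F_mono: "induced_edges E C \<subseteq> ?F" by (auto simp: induced_edges_def)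
  have in_C: "reachable ?D ?F a b" if "a \<in> C" "b \<in> C" for a b
  proof -
    have "reachable C (induced_edges E C) a b" using C that by (simp add: connected_def)
    then show ?thesis using F_mono by (rule reachable_mono[OF _ subset_insertI])
  qed
  have from_y: "reachable ?D ?F y b" if "b \<in> C" for b
    using reachable_trans[OF reachable.step[OF reachable.refl xy_D(2)] in_C[OF xy(1) that]] xy(1)
    by blast
  have to_y: "reachable ?D ?F a y" if "a \<in> C" for a
    using reachable.step[OF in_C[OF that xy(1)] xy_D(1)] by blast
  show ?thesis
    unfolding connected_def
    using in_C from_y to_y reachable.refl[of y ?D ?F] by blast
qed

lemma component_edge_through_cut:
  assumes G: "graph V E" and C: "component (V - {v}) (induced_edges E (V - {v})) C"
    and f: "f \<in> E" "f \<inter> C \<noteq> {}"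
  shows "f \<subseteq> C \<or> v \<in> f"
proof (rule ccontr)
  assume out: "\<not> (f \<subseteq> C \<or> v \<in> f)"
  obtain x y where xy: "f = {x, y}" "x \<in> V" "y \<in> V"
    using G f(1) unfolding graph_def by blast
  obtain a b where f_ab: "f = {a, b}" and ab_C: "a \<in> C" "b \<notin> C"
  proof (cases "x \<in> C")
    case True
    then have "y \<notin> C" using out xy(1) by blast
    then show ?thesis using that[of x y] True xy(1) by blast
  next
    case False
    then have "y \<in> C" using f(2) xy(1) by blast
    then show ?thesis using that[of y x] False xy(1) by (simp add: insert_commute)
  qed
  have "b \<in> f" using f_ab by simp
  then have "b \<in> V - {v}" using xy out by auto
  note ab = f(1)[unfolded f_ab] ab_C this
  have CV: "C \<subseteq> V - {v}" and conn: "connected C (induced_edges E C)"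
    and max: "\<forall>D. C \<subseteq> D \<longrightarrow> D \<subseteq> V - {v} \<longrightarrow> connected D (induced_edges E D) \<longrightarrow> D = C"
    using C unfolding component_induced_edges_iff by blast+
  have "connected (insert b C) (induced_edges E (insert b C))"
    using conn ab(2,1) by (rule connected_insert_neighbour)
  moreover have "insert b C \<subseteq> V - {v}" using CV ab(4) by blast
  ultimately have "insert b C = C"
    using max by (meson subset_insertI)
  then show False using ab(3) by blast
qed

lemma cut_vertex_neighbour_outside_component:
  assumes G: "graph V E" "connected V E" and v: "cut_vertex V E v"
    and C: "component (V - {v}) (induced_edges E (V - {v})) C"
  shows "\<exists>u. u \<notin> C \<and> {v, u} \<in> E"
proof -
  have CV: "C \<subseteq> V - {v}" and "connected C (induced_edges E C)"
    using C unfolding component_induced_edges_iff by blast+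
  then have "C \<noteq> V - {v}" using v by (auto simp: cut_vertex_def)
  then obtain y where y: "y \<in> V" "y \<noteq> v" "y \<notin> C" using CV by blast
  then have "reachable V E y v" using G(2) v by (simp add: connected_def cut_vertex_def)
  then obtain a b where ab: "{a, b} \<in> E" "a \<notin> insert v C" "b \<in> insert v C"
    using reachable_crossing_edge[of V E y v "insert v C"] y by blast
  have "b = v"
  proof (rule ccontr)
    assume "b \<noteq> v"
    then have "b \<in> C" using ab(3) by blast
    then have "{a, b} \<subseteq> C \<or> v \<in> {a, b}"
      using component_edge_through_cut[OF G(1) C ab(1)] by blast
    then show False using ab(2) \<open>b \<noteq> v\<close> by blast
  qed
  then show ?thesis using ab(1,2) by (auto simp: insert_commute)
qed

theorem lemma4p2:
  fixes V :: "'a set" and E :: "'a set set" and v :: 'a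
  assumes "graph V E"
    and "connected V E"
    and "edge_stable V E"
    and "cut_vertex V E v"
    and "component (V - {v}) (induced_edges E (V - {v})) C"
  shows "edge_stable C (induced_edges E C)"
proof -
  obtain u where u: "u \<notin> C" "{v, u} \<in> E"
    using cut_vertex_neighbour_outside_component[OF assms(1,2,4,5)] by blast
  have "v \<notin> C" using assms(5) by (auto simp: component_def)
  moreover have "\<forall>f\<in>E. f \<inter> C \<noteq> {} \<longrightarrow> f \<subseteq> C \<or> v \<in> f"
    using component_edge_through_cut[OF assms(1,5)] by blast
  ultimately show ?thesis
    using edge_stable_induced_edges_if_boundary_through[OF assms(1,3) u(2)] u(1) by blast
qed

end
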